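(* Let $-1<\lambda\le-1/2$. Then $C_\lambda(u_1,u_2,u_3)=\phi_\lambda^{[-1]}(\phi_\lambda(u_1)+\phi_\lambda(u_2)+\phi_\lambda(u_3))$, $u_1,u_2,u_3\in[0,1]$, is a valid three-dimensional copula.
   Context: For $\lambda\neq-1,0$, $\phi_\lambda(x)=\frac{1}{\lambda(\lambda+1)}(x^{\lambda+1}-x+\lambda(1-x))$ for $x\ge0$ (value at $0$ as a limit); for $-1<\lambda<0$, $\phi_\lambda(0)=1/(\lambda+1)$ and $\phi_\lambda$ is convex and strictly decreasing on $[0,1]$ with $\phi_\lambda(1)=0$. The pseudoinverse is $\phi_\lambda^{[-1]}(t)=\phi_\lambda^{-1}(t)$ (inverse of $\phi_\lambda|_{[0,1]}$) for $0\le t<\phi_\lambda(0)$ and $\phi_\lambda^{[-1]}(t)=0$ for $t\ge\phi_\lambda(0)$. A $d$-dimensional copula is a joint CDF on $[0,1]^d$ with uniform $[0,1]$ margins. *)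

theory Defs
  imports "HOL-Probability.Probability"
begin

text \<open>The generator phi_lambda, for lambda not in {-1,0}. For -1 < lambda the value at 0
  given by the formula (with 0 powr a = 0) coincides with the limit 1/(lambda+1).\<close>
definition phi :: "real \<Rightarrow> real \<Rightarrow> real" where
  "phi lam x = (x powr (lam + 1) - x + lam * (1 - x)) / (lam * (lam + 1))"

definition phi_pinv :: "real \<Rightarrow> real \<Rightarrow> real" where
  "phi_pinv lam t =
     (if t < phi lam 0 then (THE x. x \<in> {0..1} \<and> phi lam x = t) else 0)"

definition copula3 :: "(real \<Rightarrow> real \<Rightarrow> real \<Rightarrow> real) \<Rightarrow> bool" where
  "copula3 C \<longleftrightarrow>
     (\<exists>M :: (real \<times> real \<times> real) measure.
        prob_space M \<and> sets M = sets borel \<and>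
        (\<forall>u1\<in>{0..1}. \<forall>u2\<in>{0..1}. \<forall>u3\<in>{0..1}.
           C u1 u2 u3 = measure M ({..u1} \<times> {..u2} \<times> {..u3})) \<and>
        (\<forall>t\<in>{0..1}. measure M ({..t} \<times> UNIV \<times> UNIV) = t) \<and>
        (\<forall>t\<in>{0..1}. measure M (UNIV \<times> {..t} \<times> UNIV) = t) \<and>
        (\<forall>t\<in>{0..1}. measure M (UNIV \<times> UNIV \<times> {..t}) = t))"

end

theory Submission
  imports Defs "HOL-Real_Asymp.Real_Asymp"
begin

text \<open>
  Write \<open>\<psi>\<close> for the pseudoinverse of \<open>\<phi> = \<phi>\<^sub>\<lambda>\<close> and \<open>c = \<phi>(0)\<close>. Following
  McNeil and Neslehova, the copula is the law of \<open>(\<psi>(R S\<^sub>1), \<psi>(R S\<^sub>2), \<psi>(R S\<^sub>3))\<close>,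
  where \<open>S\<close> is uniform on the standard simplex and, independently, the radius \<open>R\<close> has the
  distribution function \<open>F(r) = 1 - \<psi>(r) + r \<psi>'(r) - r\<^sup>2 \<psi>''(r) / 2\<close> on \<open>[0, c]\<close>, the
  inverse Williamson 3-transform of \<open>\<psi>\<close>. Since \<open>F'(r) = - r\<^sup>2 \<psi>'''(r) / 2\<close>, \<open>F\<close> is a
  distribution function as soon as \<open>\<psi>''' \<le> 0\<close>, and this is what \<open>\<lambda> \<le> -1/2\<close> guarantees.

  As \<open>\<psi>(x) \<le> u\<close> iff \<open>\<phi>(u) \<le> x\<close>, the box \<open>[0, u\<^sub>1] \<times> [0, u\<^sub>2] \<times> [0, u\<^sub>3]\<close> has
  probability \<open>P(R S\<^sub>i \<ge> \<phi>(u\<^sub>i) for all i) = E (1 - s / R)\<^sub>+\<^sup>2\<close> with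
  \<open>s = \<phi>(u\<^sub>1) + \<phi>(u\<^sub>2) + \<phi>(u\<^sub>3)\<close>, because the corner of the simplex cut off by the
  three constraints is a scaled copy of the simplex. By Fubini this expectation equals
  \<open>\<integral>\<^sub>s\<^sup>c 2 s (y - s) / y\<^sup>3 (1 - F(y)) dy\<close>, and two integrations by parts give back
  \<open>\<psi>(s)\<close>. The margins are uniform because \<open>\<phi>(1) = 0\<close> and \<open>\<psi>(\<phi>(u)) = u\<close>.
\<close>

section \<open>The Williamson kernel\<close>

lemma has_integral_real_derivative:
  fixes f f' :: "real \<Rightarrow> real"
  assumes "a \<le> b" and "\<And>x. x \<in> {a..b} \<Longrightarrow> (f has_real_derivative f' x) (at x)"
  shows "(f' has_integral f b - f a) {a..b}"
  using assms
  by (intro fundamental_theorem_of_calculus)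
    (auto simp: has_real_derivative_iff_has_vector_derivative[symmetric] intro: has_field_derivative_at_within)

lemma ennreal_mult_2_half: "2 * ennreal (x / 2) = ennreal x"
  using ennreal_mult'[of 2 "x / 2"] by simp

definition williamson_kernel :: "real \<Rightarrow> real \<Rightarrow> real" where
  "williamson_kernel s r = (if s \<le> r then (1 - s / r)^2 else 0)"

definition williamson_kernel_deriv :: "real \<Rightarrow> real \<Rightarrow> real" where
  "williamson_kernel_deriv s r = 2 * s * (r - s) / r^3"

lemma williamson_kernel_deriv_nonneg: "0 \<le> s \<Longrightarrow> s \<le> r \<Longrightarrow> 0 \<le> williamson_kernel_deriv s r"
  unfolding williamson_kernel_deriv_def by simp

lemma williamson_kernel_eq_nn_integral:
  assumes s: "0 < s"
  shows "ennreal (williamson_kernel s r)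
    = (\<integral>\<^sup>+ y. ennreal (williamson_kernel_deriv s y) * indicator {s..<r} y \<partial>lborel)"
proof (cases "s < r")
  case False
  then show ?thesis using s by (simp add: williamson_kernel_def)
next
  case True
  have "(williamson_kernel_deriv s has_integral (1 - s / r)^2 - (1 - s / s)^2) {s..r}"
    using True s
    by (intro has_integral_real_derivative)
      (auto intro!: derivative_eq_intros simp: williamson_kernel_deriv_def field_simps power2_eq_square
        power3_eq_cube)
  then have "(williamson_kernel_deriv s has_integral williamson_kernel s r) {s..r}"
    using s True by (simp add: williamson_kernel_def)
  then have "(\<integral>\<^sup>+ y. ennreal (williamson_kernel_deriv s y) * indicator {s..r} y \<partial>lborel)
      = ennreal (williamson_kernel s r)"
    by (intro nn_integral_has_integral_lebesgue') (use s williamson_kernel_deriv_nonneg in auto)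
  moreover have "(\<integral>\<^sup>+ y. ennreal (williamson_kernel_deriv s y) * indicator {s..r} y \<partial>lborel)
      = (\<integral>\<^sup>+ y. ennreal (williamson_kernel_deriv s y) * indicator {s..<r} y \<partial>lborel)"
    by (intro nn_integral_cong_AE)
      (use AE_lborel_singleton[of r] in \<open>auto elim!: eventually_mono split: split_indicator\<close>)
  ultimately show ?thesis by simp
qed

lemma nn_integral_williamson_kernel:
  fixes \<rho> :: "real measure"
  assumes "sigma_finite_measure \<rho>" and sets_\<rho>: "sets \<rho> = sets borel" and s: "0 < s"
  shows "(\<integral>\<^sup>+ r. ennreal (williamson_kernel s r) \<partial>\<rho>)
    = (\<integral>\<^sup>+ y. ennreal (williamson_kernel_deriv s y) * emeasure \<rho> {y<..} * indicator {s..} y \<partial>lborel)"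
proof -
  interpret pair_sigma_finite lborel \<rho>
    by (intro pair_sigma_finite.intro lborel.sigma_finite_measure_axioms assms(1))
  note sets_\<rho>[measurable_cong]
  define f where "f y r = (if s \<le> y \<and> y < r then ennreal (williamson_kernel_deriv s y) else 0)" for y r
  have "(\<integral>\<^sup>+ r. ennreal (williamson_kernel s r) \<partial>\<rho>) = (\<integral>\<^sup>+ r. (\<integral>\<^sup>+ y. f y r \<partial>lborel) \<partial>\<rho>)"
    unfolding williamson_kernel_eq_nn_integral[OF s] f_def
    by (intro nn_integral_cong) (auto intro!: nn_integral_cong split: split_indicator)
  also have "\<dots> = (\<integral>\<^sup>+ y. (\<integral>\<^sup>+ r. f y r \<partial>\<rho>) \<partial>lborel)"
    by (rule Fubini') (unfold f_def williamson_kernel_deriv_def, measurable)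
  also have "\<dots> = (\<integral>\<^sup>+ y. ennreal (williamson_kernel_deriv s y) * emeasure \<rho> {y<..} * indicator {s..} y \<partial>lborel)"
  proof (intro nn_integral_cong)
    fix y :: real
    have "(\<integral>\<^sup>+ r. f y r \<partial>\<rho>)
        = (\<integral>\<^sup>+ r. (ennreal (williamson_kernel_deriv s y) * indicator {s..} y) * indicator {y<..} r \<partial>\<rho>)"
      by (intro nn_integral_cong) (simp add: f_def split: split_indicator)
    also have "\<dots> = ennreal (williamson_kernel_deriv s y) * indicator {s..} y * emeasure \<rho> {y<..}"
      by (rule nn_integral_cmult_indicator) (simp add: sets_\<rho>)
    finally show "(\<integral>\<^sup>+ r. f y r \<partial>\<rho>)
        = ennreal (williamson_kernel_deriv s y) * emeasure \<rho> {y<..} * indicator {s..} y"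
      by (simp add: ac_simps)
  qed
  finally show ?thesis .
qed

section \<open>Radial mixtures of the uniform distribution on the simplex\<close>

lemma sets_pair_lborel_Collect:
  assumes "Measurable.pred (lborel \<Otimes>\<^sub>M lborel) (\<lambda>x::real \<times> real. P (fst x) (snd x))"
  shows "{(a, b). P a b} \<in> sets (lborel \<Otimes>\<^sub>M (lborel :: real measure))"
proof -
  have "{(a, b). P a b} = {x \<in> space (lborel \<Otimes>\<^sub>M lborel). P (fst x) (snd x)}"
    by (auto simp: space_pair_measure)
  then show ?thesis using assms by (simp add: pred_def)
qed

lemma emeasure_pair_lborel_triangle:
  fixes p q m :: real
  shows "emeasure (lborel \<Otimes>\<^sub>M lborel) {(a, b). p \<le> a \<and> q \<le> b \<and> a + b \<le> m}
    = ennreal (if p + q \<le> m then (m - p - q)^2 / 2 else 0)"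
proof -
  let ?T = "{(a, b). p \<le> a \<and> q \<le> b \<and> a + b \<le> m}"
  have "?T \<in> sets (lborel \<Otimes>\<^sub>M (lborel :: real measure))"
    by (rule sets_pair_lborel_Collect) measurable
  then have "emeasure (lborel \<Otimes>\<^sub>M lborel) ?T = (\<integral>\<^sup>+ a. emeasure lborel (Pair a -` ?T) \<partial>lborel)"
    by (rule lborel.emeasure_pair_measure_alt)
  also have "\<dots> = (\<integral>\<^sup>+ a. ennreal (m - q - a) * indicator {p..m - q} a \<partial>lborel)"
  proof (intro nn_integral_cong)
    fix a :: real
    have "Pair a -` ?T = (if p \<le> a then {q..m - a} else {})"
      by auto
    then show "emeasure lborel (Pair a -` ?T) = ennreal (m - q - a) * indicator {p..m - q} a"
      by (auto simp: indicator_def)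
  qed
  also have "\<dots> = ennreal (if p + q \<le> m then (m - p - q)^2 / 2 else 0)"
  proof (cases "p + q \<le> m")
    case True
    have "((\<lambda>a. m - q - a) has_integral (- ((m - q - (m - q))^2 / 2)) - (- ((m - q - p)^2 / 2))) {p..m - q}"
      using True
      by (intro has_integral_real_derivative)
        (auto intro!: derivative_eq_intros simp: power2_eq_square field_simps)
    then have "((\<lambda>a. m - q - a) has_integral (m - p - q)^2 / 2) {p..m - q}"
      by (simp add: algebra_simps)
    then show ?thesis
      using True by (subst nn_integral_has_integral_lebesgue') auto
  qed simp
  finally show ?thesis .
qed

definition simplex2 :: "(real \<times> real) set" where
  "simplex2 = {(a, b). 0 \<le> a \<and> 0 \<le> b \<and> a + b \<le> 1}"

text \<open>If \<open>(a, b)\<close> has law \<open>uniform_simplex\<close>, then \<open>(a, b, 1 - a - b)\<close> is uniformly distributed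
  on the standard simplex of \<open>\<real>\<^sup>3\<close>.\<close>
definition uniform_simplex :: "(real \<times> real) measure" where
  "uniform_simplex = density (lborel \<Otimes>\<^sub>M lborel) (\<lambda>x. 2 * indicator simplex2 x)"

lemma sets_uniform_simplex [simp, measurable_cong]:
  "sets uniform_simplex = sets (lborel \<Otimes>\<^sub>M lborel)"
  by (simp add: uniform_simplex_def)

lemma space_uniform_simplex [simp]: "space uniform_simplex = UNIV"
  by (simp add: uniform_simplex_def space_pair_measure)

lemma simplex2_in_sets [measurable]: "simplex2 \<in> sets (lborel \<Otimes>\<^sub>M lborel)"
  unfolding simplex2_def by (rule sets_pair_lborel_Collect) measurable

lemma emeasure_uniform_simplex:
  assumes "A \<in> sets (lborel \<Otimes>\<^sub>M lborel)"
  shows "emeasure uniform_simplex A = 2 * emeasure (lborel \<Otimes>\<^sub>M lborel) (simplex2 \<inter> A)"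
proof -
  have "emeasure uniform_simplex A
      = (\<integral>\<^sup>+ x. 2 * indicator (simplex2 \<inter> A) x \<partial>(lborel \<Otimes>\<^sub>M lborel))"
    unfolding uniform_simplex_def using assms
    by (subst emeasure_density) (auto intro!: nn_integral_cong split: split_indicator)
  also have "\<dots> = 2 * emeasure (lborel \<Otimes>\<^sub>M lborel) (simplex2 \<inter> A)"
    by (intro nn_integral_cmult_indicator sets.Int simplex2_in_sets assms)
  finally show ?thesis .
qed

lemma emeasure_uniform_simplex_Int_simplex2:
  assumes "A \<in> sets (lborel \<Otimes>\<^sub>M lborel)"
  shows "emeasure uniform_simplex (simplex2 \<inter> A) = emeasure uniform_simplex A"
  using emeasure_uniform_simplex[OF assms] emeasure_uniform_simplex[OF sets.Int[OF simplex2_in_sets assms]]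
  by simp

lemma prob_space_uniform_simplex: "prob_space uniform_simplex"
proof
  have "space uniform_simplex \<in> sets (lborel \<Otimes>\<^sub>M lborel)"
    by (metis sets.top sets_uniform_simplex)
  moreover have "simplex2 \<inter> space uniform_simplex = {(a, b). 0 \<le> a \<and> 0 \<le> b \<and> a + b \<le> 1}"
    by (simp add: simplex2_def)
  ultimately show "emeasure uniform_simplex (space uniform_simplex) = 1"
    using emeasure_uniform_simplex emeasure_pair_lborel_triangle[of 0 0 1] ennreal_mult_2_half[of 1]
    by simp
qed

lemma emeasure_uniform_simplex_corner:
  fixes r t1 t2 t3 :: real
  assumes r: "0 < r" and t: "0 \<le> t1" "0 \<le> t2" "0 \<le> t3"
  shows "emeasure uniform_simplex (simplex2 \<inter> {(a, b). t1 \<le> r * a \<and> t2 \<le> r * b \<and> t3 \<le> r * (1 - a - b)})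
    = ennreal (williamson_kernel (t1 + t2 + t3) r)"
proof -
  let ?C = "simplex2 \<inter> {(a, b). t1 \<le> r * a \<and> t2 \<le> r * b \<and> t3 \<le> r * (1 - a - b)}"
  have div_le: "t \<le> r * x \<longleftrightarrow> t / r \<le> x" for t x
    using r by (simp add: pos_divide_le_eq mult.commute)
  have "0 \<le> t1 / r" "0 \<le> t2 / r" "0 \<le> t3 / r"
    using r t by simp_all
  then have C: "?C = {(a, b). t1 / r \<le> a \<and> t2 / r \<le> b \<and> a + b \<le> 1 - t3 / r}"
    unfolding simplex2_def div_le by auto
  have sum: "t1 / r + t2 / r + t3 / r = (t1 + t2 + t3) / r"
    by (simp add: add_divide_distrib)
  have "(t1 + t2 + t3) / r \<le> 1 \<longleftrightarrow> t1 + t2 + t3 \<le> r"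
    using r by (simp add: pos_divide_le_eq)
  then have cond: "t1 / r + t2 / r \<le> 1 - t3 / r \<longleftrightarrow> t1 + t2 + t3 \<le> r"
    using sum by linarith
  have side: "1 - t3 / r - t1 / r - t2 / r = 1 - (t1 + t2 + t3) / r"
    using sum by linarith
  have "?C \<in> sets (lborel \<Otimes>\<^sub>M lborel)"
    unfolding C by (rule sets_pair_lborel_Collect) measurable
  then have "emeasure uniform_simplex ?C = 2 * emeasure (lborel \<Otimes>\<^sub>M lborel) ?C"
    using emeasure_uniform_simplex by (simp add: Int_absorb1)
  also have "\<dots> = ennreal (williamson_kernel (t1 + t2 + t3) r)"
    unfolding C emeasure_pair_lborel_triangle cond side williamson_kernel_def
    by (simp add: ennreal_mult_2_half)
  finally show ?thesis .
qed

lemma Times_in_sets_borel3: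
  fixes A B C :: "real set"
  assumes "A \<in> sets borel" "B \<in> sets borel" "C \<in> sets borel"
  shows "A \<times> B \<times> C \<in> sets (borel :: (real \<times> real \<times> real) measure)"
  unfolding borel_prod[symmetric] using assms by (intro pair_measureI) auto

lemma emeasure_uniform_simplex_thresholds:
  fixes g :: "real \<Rightarrow> real"
  assumes r: "0 < r" and g [measurable]: "g \<in> borel_measurable borel"
    and t: "0 \<le> t1" "0 \<le> t2" "0 \<le> t3"
    and g_le: "\<And>x. 0 \<le> x \<Longrightarrow> g x \<le> u1 \<longleftrightarrow> t1 \<le> x" "\<And>x. 0 \<le> x \<Longrightarrow> g x \<le> u2 \<longleftrightarrow> t2 \<le> x"
      "\<And>x. 0 \<le> x \<Longrightarrow> g x \<le> u3 \<longleftrightarrow> t3 \<le> x"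
  shows "emeasure uniform_simplex {(a, b). g (r * a) \<le> u1 \<and> g (r * b) \<le> u2 \<and> g (r * (1 - a - b)) \<le> u3}
    = ennreal (williamson_kernel (t1 + t2 + t3) r)"
proof -
  let ?A = "{(a, b). g (r * a) \<le> u1 \<and> g (r * b) \<le> u2 \<and> g (r * (1 - a - b)) \<le> u3}"
  have "0 \<le> r * a" "0 \<le> r * b" "0 \<le> r * (1 - a - b)" if "(a, b) \<in> simplex2" for a b
    using that r by (simp_all add: simplex2_def)
  then have corner: "simplex2 \<inter> ?A = simplex2 \<inter> {(a, b). t1 \<le> r * a \<and> t2 \<le> r * b \<and> t3 \<le> r * (1 - a - b)}"
    using g_le by auto
  have "?A \<in> sets (lborel \<Otimes>\<^sub>M lborel)"
    by (intro sets_pair_lborel_Collect) measurable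
  then have "emeasure uniform_simplex ?A = emeasure uniform_simplex (simplex2 \<inter> ?A)"
    by (simp add: emeasure_uniform_simplex_Int_simplex2)
  also have "\<dots> = ennreal (williamson_kernel (t1 + t2 + t3) r)"
    unfolding corner by (rule emeasure_uniform_simplex_corner[OF r t])
  finally show ?thesis .
qed

definition simplex_mixture :: "real measure \<Rightarrow> (real \<Rightarrow> real) \<Rightarrow> (real \<times> real \<times> real) measure" where
  "simplex_mixture \<rho> g = distr (\<rho> \<Otimes>\<^sub>M uniform_simplex) borel
     (\<lambda>(r, a, b). (g (r * a), g (r * b), g (r * (1 - a - b))))"

lemma measurable_simplex_mixture_map:
  fixes \<rho> :: "real measure" and g :: "real \<Rightarrow> real"
  assumes "sets \<rho> = sets borel" and [measurable]: "g \<in> borel_measurable borel"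
  shows "(\<lambda>(r, a, b). (g (r * a), g (r * b), g (r * (1 - a - b)))) \<in> \<rho> \<Otimes>\<^sub>M uniform_simplex \<rightarrow>\<^sub>M borel"
  using assms(1)[measurable_cong] by measurable

lemma sets_simplex_mixture [simp]: "sets (simplex_mixture \<rho> g) = sets borel"
  by (simp add: simplex_mixture_def)

lemma prob_space_simplex_mixture:
  assumes "prob_space \<rho>" "sets \<rho> = sets borel" "g \<in> borel_measurable borel"
  shows "prob_space (simplex_mixture \<rho> g)"
  unfolding simplex_mixture_def
  by (intro prob_space.prob_space_distr prob_space_pair assms prob_space_uniform_simplex
      measurable_simplex_mixture_map)

lemma emeasure_simplex_mixture_box:
  fixes \<rho> :: "real measure" and g :: "real \<Rightarrow> real"
  assumes sets_\<rho>: "sets \<rho> = sets borel" and pos: "AE r in \<rho>. 0 < r"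
    and g: "g \<in> borel_measurable borel" and t: "0 \<le> t1" "0 \<le> t2" "0 \<le> t3"
    and g_le: "\<And>x. 0 \<le> x \<Longrightarrow> g x \<le> u1 \<longleftrightarrow> t1 \<le> x" "\<And>x. 0 \<le> x \<Longrightarrow> g x \<le> u2 \<longleftrightarrow> t2 \<le> x"
      "\<And>x. 0 \<le> x \<Longrightarrow> g x \<le> u3 \<longleftrightarrow> t3 \<le> x"
  shows "emeasure (simplex_mixture \<rho> g) ({..u1} \<times> {..u2} \<times> {..u3})
    = (\<integral>\<^sup>+ r. ennreal (williamson_kernel (t1 + t2 + t3) r) \<partial>\<rho>)"
proof -
  interpret uniform_simplex: prob_space uniform_simplex
    by (rule prob_space_uniform_simplex)
  define f :: "real \<times> real \<times> real \<Rightarrow> real \<times> real \<times> real"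
    where "f = (\<lambda>(r, a, b). (g (r * a), g (r * b), g (r * (1 - a - b))))"
  let ?B = "{..u1} \<times> {..u2} \<times> {..u3}"
  define E where "E = f -` ?B \<inter> space (\<rho> \<Otimes>\<^sub>M uniform_simplex)"
  have f: "f \<in> \<rho> \<Otimes>\<^sub>M uniform_simplex \<rightarrow>\<^sub>M borel"
    unfolding f_def using sets_\<rho> g by (rule measurable_simplex_mixture_map)
  have B: "?B \<in> sets borel"
    by (intro Times_in_sets_borel3) auto
  have E: "E \<in> sets (\<rho> \<Otimes>\<^sub>M uniform_simplex)"
    unfolding E_def using f B by (rule measurable_sets)
  have "emeasure (simplex_mixture \<rho> g) ?B = emeasure (\<rho> \<Otimes>\<^sub>M uniform_simplex) E"
    unfolding simplex_mixture_def E_def f_def[symmetric] using f B by (rule emeasure_distr)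
  also have "\<dots> = (\<integral>\<^sup>+ r. emeasure uniform_simplex (Pair r -` E) \<partial>\<rho>)"
    using E by (rule uniform_simplex.emeasure_pair_measure_alt)
  also have "\<dots> = (\<integral>\<^sup>+ r. ennreal (williamson_kernel (t1 + t2 + t3) r) \<partial>\<rho>)"
  proof (rule nn_integral_cong_AE)
    show "AE r in \<rho>. emeasure uniform_simplex (Pair r -` E) = williamson_kernel (t1 + t2 + t3) r"
      using pos
    proof eventually_elim
      case (elim r)
      have "space \<rho> = UNIV"
        using sets_eq_imp_space_eq[OF sets_\<rho>] by simp
      then have "Pair r -` E = {(a, b). g (r * a) \<le> u1 \<and> g (r * b) \<le> u2 \<and> g (r * (1 - a - b)) \<le> u3}"
        by (auto simp: E_def f_def space_pair_measure)
      then show ?case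
        using emeasure_uniform_simplex_thresholds[OF elim g t g_le] by simp
    qed
  qed
  finally show ?thesis .
qed

lemma measure_simplex_mixture_Times_bound:
  fixes \<rho> :: "real measure" and g :: "real \<Rightarrow> real"
  assumes "sets \<rho> = sets borel" "g \<in> borel_measurable borel" "\<And>x. g x \<le> c"
    and sets: "A \<in> sets borel" "B \<in> sets borel" "C \<in> sets borel"
  shows "measure (simplex_mixture \<rho> g) (A \<times> B \<times> C)
    = measure (simplex_mixture \<rho> g) ((A \<inter> {..c}) \<times> (B \<inter> {..c}) \<times> (C \<inter> {..c}))"
proof -
  let ?f = "\<lambda>(r, a, b). (g (r * a), g (r * b), g (r * (1 - a - b)))"
  have f: "?f \<in> \<rho> \<Otimes>\<^sub>M uniform_simplex \<rightarrow>\<^sub>M borel"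
    using assms(1,2) by (rule measurable_simplex_mixture_map)
  have "?f -` ((A \<inter> {..c}) \<times> (B \<inter> {..c}) \<times> (C \<inter> {..c})) = ?f -` (A \<times> B \<times> C)"
    using assms(3) by auto
  then show ?thesis
    unfolding simplex_mixture_def
    using measure_distr[OF f Times_in_sets_borel3[OF sets]] measure_distr[OF f Times_in_sets_borel3] sets
    by simp
qed

section \<open>The generator and its pseudoinverse\<close>

locale phi_generator =
  fixes lam :: real
  assumes lam_gt: "-1 < lam" and lam_neg: "lam < 0"
begin

lemma lam_nonzero: "lam \<noteq> 0" "lam + 1 \<noteq> 0" "lam * (lam + 1) \<noteq> 0"
  using lam_gt lam_neg by auto

definition c :: real where "c = 1 / (lam + 1)"

lemma c_pos: "0 < c"
  unfolding c_def using lam_gt by simp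

lemma phi_0: "phi lam 0 = c"
  using lam_nonzero unfolding phi_def c_def by (simp add: field_simps)

lemma phi_1: "phi lam 1 = 0"
  unfolding phi_def by simp

definition dphi :: "real \<Rightarrow> real" where
  "dphi x = (x powr lam - 1) / lam"

lemma phi_has_real_derivative:
  assumes "0 < x"
  shows "(phi lam has_real_derivative dphi x) (at x)"
proof -
  have "((\<lambda>x. x powr (lam + 1)) has_real_derivative (lam + 1) * x powr lam) (at x)"
    using has_real_derivative_powr[OF assms, of "lam + 1"] by simp
  then have "((\<lambda>x. (x powr (lam + 1) - x + lam * (1 - x)) / (lam * (lam + 1)))
      has_real_derivative ((lam + 1) * x powr lam - 1 + lam * (0 - 1)) / (lam * (lam + 1))) (at x)"
    by (intro DERIV_cdivide DERIV_add DERIV_diff DERIV_cmult DERIV_ident DERIV_const)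
  moreover have "(lam + 1) * x powr lam - 1 + lam * (0 - 1) = (lam + 1) * (x powr lam - 1)"
    by (simp add: algebra_simps)
  then have "((lam + 1) * x powr lam - 1 + lam * (0 - 1)) / (lam * (lam + 1)) = dphi x"
    using lam_nonzero unfolding dphi_def by simp
  ultimately show ?thesis
    unfolding phi_def[abs_def] by simp
qed

lemma one_less_powr_lam: "0 < x \<Longrightarrow> x < 1 \<Longrightarrow> 1 < x powr lam"
  using powr_less_mono2_neg[OF lam_neg, of x 1] by simp

lemma dphi_neg: "0 < x \<Longrightarrow> x < 1 \<Longrightarrow> dphi x < 0"
  unfolding dphi_def using one_less_powr_lam lam_neg by (simp add: divide_pos_neg)

lemma continuous_on_phi: "continuous_on {0..1} (phi lam)"
proof -
  have "continuous_on {0..1} (\<lambda>x::real. x powr (lam + 1))"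
    using lam_gt by (intro continuous_on_powr') (auto intro: continuous_on_id continuous_on_const)
  then show ?thesis
    unfolding phi_def[abs_def]
    by (intro continuous_on_divide continuous_on_diff continuous_on_add continuous_on_mult
        continuous_on_id continuous_on_const) (use lam_gt lam_neg in auto)
qed

lemma phi_strict_antimono:
  assumes "0 \<le> x" "x < y" "y \<le> 1"
  shows "phi lam y < phi lam x"
proof (rule DERIV_neg_imp_decreasing_open[OF assms(2)])
  fix z assume "x < z" "z < y"
  then show "\<exists>d. (phi lam has_real_derivative d) (at z) \<and> d < 0"
    using assms phi_has_real_derivative dphi_neg by (intro exI[of _ "dphi z"]) auto
next
  show "continuous_on {x..y} (phi lam)"
    using continuous_on_phi by (rule continuous_on_subset) (use assms in auto)
qed

lemma phi_antimono: "0 \<le> x \<Longrightarrow> x \<le> y \<Longrightarrow> y \<le> 1 \<Longrightarrow> phi lam y \<le> phi lam x"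
  using phi_strict_antimono by (cases "x = y") (auto intro: less_imp_le)

lemma inj_on_phi: "inj_on (phi lam) {0..1}"
  by (rule inj_onI) (metis atLeastAtMost_iff linorder_neqE_linordered_idom order_less_irrefl phi_strict_antimono)

lemma phi_range: "x \<in> {0..1} \<Longrightarrow> phi lam x \<in> {0..c}"
  using phi_antimono[of x 1] phi_antimono[of 0 x] phi_0 phi_1 by auto

lemma phi_image: "phi lam ` {0..1} = {0..c}"
proof
  show "phi lam ` {0..1} \<subseteq> {0..c}"
    using phi_range by auto
  show "{0..c} \<subseteq> phi lam ` {0..1}"
  proof
    fix t assume "t \<in> {0..c}"
    then obtain x where "0 \<le> x" "x \<le> 1" "phi lam x = t"
      using IVT2'[of "phi lam" 1 t 0] phi_0 phi_1 continuous_on_phi by auto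
    then show "t \<in> phi lam ` {0..1}"
      by auto
  qed
qed

definition psi :: "real \<Rightarrow> real" where
  "psi t = phi_pinv lam t"

lemma psi_inverse:
  assumes "0 \<le> t" "t < c"
  shows "psi t \<in> {0..1}" "phi lam (psi t) = t"
proof -
  obtain x where x: "x \<in> {0..1}" "phi lam x = t"
    using phi_image assms by (metis atLeastAtMost_iff imageE less_eq_real_def)
  have "(THE x. x \<in> {0..1} \<and> phi lam x = t) = x"
    using x inj_on_phi by (intro the_equality) (auto dest: inj_onD)
  then show "psi t \<in> {0..1}" "phi lam (psi t) = t"
    unfolding psi_def phi_pinv_def using assms x phi_0 by simp_all
qed

lemma psi_eq_0: "c \<le> t \<Longrightarrow> psi t = 0"
  unfolding psi_def phi_pinv_def using phi_0 by simp

lemma psi_phi: "x \<in> {0..1} \<Longrightarrow> psi (phi lam x) = x"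
proof (cases "x = 0")
  case False
  assume x: "x \<in> {0..1}"
  then have "0 \<le> phi lam x" "phi lam x < c"
    using phi_range phi_strict_antimono[of 0 x] phi_0 False by auto
  then have "psi (phi lam x) \<in> {0..1}" "phi lam (psi (phi lam x)) = phi lam x"
    using psi_inverse by auto
  then show ?thesis
    using x inj_on_phi by (auto dest: inj_onD)
qed (simp add: psi_eq_0 phi_0)

lemma psi_0: "psi 0 = 1"
  using psi_phi[of 1] phi_1 by simp

lemma psi_range: "0 \<le> t \<Longrightarrow> psi t \<in> {0..1}"
  using psi_inverse psi_eq_0 by (cases "t < c") auto

lemma phi_psi_le: "0 \<le> t \<Longrightarrow> phi lam (psi t) \<le> t"
  using psi_inverse psi_eq_0 phi_0 by (cases "t < c") auto

lemma psi_le_iff: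
  assumes "0 \<le> t" "u \<in> {0..1}"
  shows "psi t \<le> u \<longleftrightarrow> phi lam u \<le> t"
proof (cases "t < c")
  case False
  then show ?thesis
    using psi_eq_0 phi_range[OF assms(2)] assms by auto
next
  case True
  then have "psi t \<in> {0..1}" "phi lam (psi t) = t"
    using psi_inverse assms by auto
  then show ?thesis
    using phi_strict_antimono[of u "psi t"] phi_antimono[of "psi t" u] assms by force
qed

lemma psi_in_open: "0 < t \<Longrightarrow> t < c \<Longrightarrow> psi t \<in> {0<..<1}"
  using psi_inverse[of t] phi_0 phi_1 by (fastforce simp: less_le)

lemma continuous_on_psi: "continuous_on {0..c} psi"
proof -
  have "continuous_on (phi lam ` {0..1}) psi"
    by (rule continuous_on_inv[OF continuous_on_phi compact_Icc]) (use psi_phi in blast)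
  then show ?thesis
    using phi_image by simp
qed

text \<open>The extension of \<open>psi\<close> to negative arguments only serves to make the map
  defining the copula measure Borel measurable on all of \<open>\<real>\<^sup>3\<close>.\<close>
definition psi_ext :: "real \<Rightarrow> real" where
  "psi_ext t = psi (max 0 t)"

lemma psi_ext_le_iff: "u \<in> {0..1} \<Longrightarrow> 0 \<le> x \<Longrightarrow> psi_ext x \<le> u \<longleftrightarrow> phi lam u \<le> x"
  unfolding psi_ext_def by (simp add: psi_le_iff)

lemma psi_ext_le_1: "psi_ext x \<le> 1"
  unfolding psi_ext_def using psi_range by simp

lemma antimono_psi_ext: "antimono psi_ext"
proof (rule antimonoI)
  fix s t :: real assume "s \<le> t"
  moreover have "psi_ext s \<in> {0..1}"
    unfolding psi_ext_def using psi_range by simp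
  ultimately show "psi_ext t \<le> psi_ext s"
    using phi_psi_le[of "max 0 s"] psi_ext_le_iff unfolding psi_ext_def by force
qed

lemma borel_measurable_psi_ext: "psi_ext \<in> borel_measurable borel"
proof -
  have "mono (\<lambda>t. psi_ext (- t))"
    using antimono_psi_ext by (auto simp: mono_def antimono_def)
  then have "(\<lambda>t. psi_ext (- t)) \<in> borel_measurable borel"
    by (rule borel_measurable_mono)
  then have "(\<lambda>t. psi_ext (- (- t))) \<in> borel_measurable borel"
    by measurable
  then show ?thesis
    by simp
qed

text \<open>On \<open>0 < t < c\<close> the derivatives of \<open>psi\<close> are \<open>psi' t = psi1 (psi t)\<close> and
  \<open>psi'' t = psi2 (psi t)\<close>. At \<open>0\<close> the formula for \<open>psi1\<close> would give \<open>-lam\<close>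
  (as \<open>0 powr lam = 0\<close>); the value \<open>0\<close> is the limit of \<open>psi'\<close> at \<open>c\<close>.\<close>
definition psi1 :: "real \<Rightarrow> real" where
  "psi1 x = (if 0 < x then lam / (x powr lam - 1) else 0)"

definition psi2 :: "real \<Rightarrow> real" where
  "psi2 x = - (lam ^ 3) * x powr (lam - 1) / (x powr lam - 1)^3"

definition dpsi2 :: "real \<Rightarrow> real" where
  "dpsi2 x = - (lam ^ 3) * x powr (lam - 2) * ((lam - 1) * (x powr lam - 1) - 3 * lam * x powr lam)
    / (x powr lam - 1)^4"

lemma psi1_neg: "0 < x \<Longrightarrow> x < 1 \<Longrightarrow> psi1 x < 0"
  unfolding psi1_def using one_less_powr_lam lam_neg by (simp add: divide_neg_pos)

lemma psi2_pos:
  assumes "0 < x" "x < 1"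
  shows "0 < psi2 x"
proof -
  have "lam ^ 3 < 0"
    using lam_neg by (simp add: power_less_zero_eq)
  then show ?thesis
    unfolding psi2_def using one_less_powr_lam[OF assms] assms
    by (intro divide_pos_pos mult_pos_pos) auto
qed

lemma psi_has_real_derivative:
  assumes "0 < t" "t < c"
  shows "(psi has_real_derivative psi1 (psi t)) (at t)"
proof -
  have p: "0 < psi t" "psi t < 1"
    using psi_in_open assms by auto
  have "(psi has_real_derivative inverse (dphi (psi t))) (at t)"
  proof (rule DERIV_inverse_function[where a = 0 and b = c])
    show "(phi lam has_real_derivative dphi (psi t)) (at (psi t))"
      using phi_has_real_derivative p by simp
    show "dphi (psi t) \<noteq> 0"
      using dphi_neg p by force
    show "isCont psi t"
      using continuous_on_interior[OF continuous_on_psi, of t] assms by simp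
  qed (use assms psi_inverse in auto)
  moreover have "inverse (dphi (psi t)) = psi1 (psi t)"
    unfolding dphi_def psi1_def using p by simp
  ultimately show ?thesis
    by simp
qed

lemma psi1_has_real_derivative:
  assumes "0 < x" "x < 1"
  shows "(psi1 has_real_derivative - (lam ^ 2) * x powr (lam - 1) / (x powr lam - 1)^2) (at x)"
proof -
  have ev: "\<forall>\<^sub>F y in nhds x. lam / (y powr lam - 1) = psi1 y"
    using eventually_nhds_in_open[of "{0<..}" x] assms unfolding psi1_def
    by (auto elim!: eventually_mono)
  have "x powr lam \<noteq> 1"
    using one_less_powr_lam assms by force
  then have "((\<lambda>y. lam / (y powr lam - 1)) has_real_derivative
      - (lam ^ 2) * x powr (lam - 1) / (x powr lam - 1)^2) (at x)"
    using assms by (auto intro!: derivative_eq_intros simp: power2_eq_square powr_diff)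
  then show ?thesis
    using DERIV_cong_ev[OF refl ev refl] by simp
qed

lemma psi1_psi_has_real_derivative:
  assumes "0 < t" "t < c"
  shows "((\<lambda>t. psi1 (psi t)) has_real_derivative psi2 (psi t)) (at t)"
proof -
  have p: "0 < psi t" "psi t < 1"
    using psi_in_open assms by auto
  have "psi t powr lam - 1 \<noteq> 0"
    using one_less_powr_lam p by force
  then have "- (lam ^ 2) * psi t powr (lam - 1) / (psi t powr lam - 1)^2 * psi1 (psi t) = psi2 (psi t)"
    unfolding psi1_def psi2_def using p by (simp add: field_simps power3_eq_cube power2_eq_square)
  then show ?thesis
    using DERIV_chain2[OF psi1_has_real_derivative[OF p] psi_has_real_derivative[OF assms]] by simp
qed

lemma psi2_has_real_derivative:
  assumes "0 < x" "x < 1"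
  shows "(psi2 has_real_derivative dpsi2 x) (at x)"
proof -
  have "x powr lam \<noteq> 1"
    using one_less_powr_lam assms by force
  then have "(psi2 has_real_derivative
      - (lam ^ 3) * ((lam - 1) * x powr (lam - 2) * (x powr lam - 1)^3
        - x powr (lam - 1) * (3 * (x powr lam - 1)^2 * (lam * x powr (lam - 1)))) / ((x powr lam - 1)^3)^2)
      (at x)"
    unfolding psi2_def[abs_def] using assms
    by (auto intro!: derivative_eq_intros) (simp add: algebra_simps)
  moreover have "x powr (lam - 1) = x powr lam / x" "x powr (lam - 2) = x powr lam / x^2"
    using assms by (simp_all add: powr_diff)
  moreover have "- (lam ^ 3) * ((lam - 1) * (p / x^2) * (p - 1)^3 - (p / x) * (3 * (p - 1)^2 * (lam * (p / x))))
        / ((p - 1)^3)^2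
      = - (lam ^ 3) * (p / x^2) * ((lam - 1) * (p - 1) - 3 * lam * p) / (p - 1)^4" if "p \<noteq> 1" for p
    using that assms by (simp add: field_simps power2_eq_square) algebra
  ultimately show ?thesis
    unfolding dpsi2_def using \<open>x powr lam \<noteq> 1\<close> by simp
qed

lemma psi2_psi_has_real_derivative:
  assumes "0 < t" "t < c"
  shows "((\<lambda>t. psi2 (psi t)) has_real_derivative dpsi2 (psi t) * psi1 (psi t)) (at t)"
  using psi_in_open[OF assms]
  by (intro DERIV_chain2[OF psi2_has_real_derivative psi_has_real_derivative[OF assms]]) auto

section \<open>The radial distribution\<close>

definition inv_williamson :: "real \<Rightarrow> real" where
  "inv_williamson t = 1 - psi t + t * psi1 (psi t) - t^2 * psi2 (psi t) / 2"

definition radial_cdf :: "real \<Rightarrow> real" where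
  "radial_cdf r = (if r \<le> 0 then 0 else if r < c then inv_williamson r else 1)"

lemma inv_williamson_has_real_derivative:
  assumes "0 < t" "t < c"
  shows "(inv_williamson has_real_derivative - (t^2 / 2) * dpsi2 (psi t) * psi1 (psi t)) (at t)"
proof -
  have "((\<lambda>t. t * psi1 (psi t)) has_real_derivative 1 * psi1 (psi t) + t * psi2 (psi t)) (at t)"
    using DERIV_mult'[OF DERIV_ident psi1_psi_has_real_derivative[OF assms]] by (simp add: add.commute)
  moreover have "((\<lambda>t. t^2 * psi2 (psi t)) has_real_derivative
      2 * t * psi2 (psi t) + t^2 * (dpsi2 (psi t) * psi1 (psi t))) (at t)"
    using DERIV_mult'[OF DERIV_power[OF DERIV_ident, of 2] psi2_psi_has_real_derivative[OF assms]]
    by (simp add: add.commute)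
  ultimately have "(inv_williamson has_real_derivative
      0 - psi1 (psi t) + (1 * psi1 (psi t) + t * psi2 (psi t))
      - (2 * t * psi2 (psi t) + t^2 * (dpsi2 (psi t) * psi1 (psi t))) / 2) (at t)"
    unfolding inv_williamson_def[abs_def]
    by (intro DERIV_diff DERIV_add DERIV_const DERIV_cdivide psi_has_real_derivative[OF assms])
  then show ?thesis
    by (simp add: field_simps)
qed

lemma inv_williamson_le_1:
  assumes "0 < t" "t < c"
  shows "inv_williamson t \<le> 1"
proof -
  have p: "0 < psi t" "psi t < 1"
    using psi_in_open assms by auto
  have "t * psi1 (psi t) \<le> 0"
    using psi1_neg[OF p] assms by (simp add: mult_nonneg_nonpos)
  moreover have "0 \<le> t^2 * psi2 (psi t) / 2"
    using psi2_pos[OF p] by simp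
  ultimately show ?thesis
    unfolding inv_williamson_def using p by simp
qed

lemma psi_tendsto_1_at_right_0: "filterlim psi (at_left 1) (at_right 0)"
proof (rule tendsto_imp_filterlim_at_left)
  have "(psi \<longlongrightarrow> psi 0) (at 0 within {0..c})"
    using continuous_on_psi c_pos unfolding continuous_on_def by auto
  then show "(psi \<longlongrightarrow> 1) (at_right 0)"
    using psi_0 at_within_Icc_at_right[OF c_pos] by simp
  show "\<forall>\<^sub>F x in at_right 0. psi x < 1"
    using eventually_at_right_real[OF c_pos] by eventually_elim (use psi_in_open in auto)
qed

lemma psi_tendsto_0_at_left_c: "filterlim psi (at_right 0) (at_left c)"
proof (rule tendsto_imp_filterlim_at_right)
  have "(psi \<longlongrightarrow> psi c) (at c within {0..c})"
    using continuous_on_psi c_pos unfolding continuous_on_def by auto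
  then show "(psi \<longlongrightarrow> 0) (at_left c)"
    using psi_eq_0[of c] at_within_Icc_at_left[OF c_pos] by simp
  show "\<forall>\<^sub>F x in at_left c. 0 < psi x"
    using eventually_at_left_real[OF c_pos] by eventually_elim (use psi_in_open in auto)
qed

lemma psi1_psi_tendsto_0_at_left_c: "((\<lambda>t. psi1 (psi t)) \<longlongrightarrow> 0) (at_left c)"
proof -
  have "((\<lambda>x. lam / (x powr lam - 1)) \<longlongrightarrow> 0) (at_right 0)"
    using lam_neg by real_asymp
  moreover have "\<forall>\<^sub>F x in at_right 0. lam / (x powr lam - 1) = psi1 x"
    using eventually_at_right_less[of "0::real"] by eventually_elim (simp add: psi1_def)
  ultimately have "(psi1 \<longlongrightarrow> 0) (at_right 0)"
    by (rule Lim_transform_eventually)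
  then show ?thesis
    by (rule filterlim_compose[OF _ psi_tendsto_0_at_left_c])
qed

lemma inv_williamson_tendsto_0: "(inv_williamson \<longlongrightarrow> 0) (at_right 0)"
proof -
  \<comment> \<open>\<open>G x = inv_williamson (phi lam x)\<close>, written out so that \<open>real_asymp\<close> can take the limit\<close>
  define G where "G x = 1 - x + phi lam x * (lam / (x powr lam - 1))
     - (phi lam x)^2 * (- (lam ^ 3) * x powr (lam - 1) / (x powr lam - 1)^3) / 2" for x
  have "(G \<longlongrightarrow> 0) (at_left 1)"
    unfolding G_def phi_def using lam_neg lam_gt by real_asymp
  then have "((\<lambda>t. G (psi t)) \<longlongrightarrow> 0) (at_right 0)"
    by (rule filterlim_compose[OF _ psi_tendsto_1_at_right_0])
  moreover have "\<forall>\<^sub>F t in at_right 0. G (psi t) = inv_williamson t"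
    using eventually_at_right_real[OF c_pos]
  proof eventually_elim
    case (elim t)
    then have "0 < psi t" "phi lam (psi t) = t"
      using psi_in_open psi_inverse by auto
    then show ?case
      unfolding G_def inv_williamson_def psi1_def psi2_def by simp
  qed
  ultimately show ?thesis
    by (rule Lim_transform_eventually)
qed

text \<open>Integrating \<open>williamson_kernel_deriv s y * (1 - inv_williamson y)\<close> by parts twice gives
  this primitive in \<open>y\<close>.\<close>
definition williamson_primitive :: "real \<Rightarrow> real \<Rightarrow> real" where
  "williamson_primitive s y = (s^2 / y^2 - 2 * s / y) * psi y + s * (y - s) / y * psi1 (psi y)"

lemma williamson_primitive_has_real_derivative:
  assumes "0 < y" "y < c"
  shows "(williamson_primitive s has_real_derivative
    williamson_kernel_deriv s y * (1 - inv_williamson y)) (at y)"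
proof -
  have "((\<lambda>y. s^2 / y^2 - 2 * s / y) has_real_derivative - 2 * s^2 / y^3 + 2 * s / y^2) (at y)"
    using assms by (auto intro!: derivative_eq_intros simp: field_simps power2_eq_square power3_eq_cube)
  moreover have "((\<lambda>y. s * (y - s) / y) has_real_derivative s^2 / y^2) (at y)"
    using assms by (auto intro!: derivative_eq_intros simp: field_simps power2_eq_square)
  ultimately have "(williamson_primitive s has_real_derivative
      ((s^2 / y^2 - 2 * s / y) * psi1 (psi y) + (- 2 * s^2 / y^3 + 2 * s / y^2) * psi y)
      + (s * (y - s) / y * psi2 (psi y) + s^2 / y^2 * psi1 (psi y))) (at y)"
    unfolding williamson_primitive_def[abs_def]
    by (intro DERIV_add DERIV_mult' psi_has_real_derivative[OF assms] psi1_psi_has_real_derivative[OF assms])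
  moreover have "((s^2 / y^2 - 2 * s / y) * psi1 (psi y) + (- 2 * s^2 / y^3 + 2 * s / y^2) * psi y)
      + (s * (y - s) / y * psi2 (psi y) + s^2 / y^2 * psi1 (psi y))
      = williamson_kernel_deriv s y * (1 - inv_williamson y)"
    unfolding williamson_kernel_deriv_def inv_williamson_def
    using assms by (simp add: field_simps power2_eq_square power3_eq_cube)
  ultimately show ?thesis
    by simp
qed

lemma williamson_primitive_at_c: "williamson_primitive s c = 0"
  unfolding williamson_primitive_def using psi_eq_0[of c] by (simp add: psi1_def)

lemma continuous_on_williamson_primitive:
  assumes "0 < s" "s < c"
  shows "continuous_on {s..c} (williamson_primitive s)"
proof -
  have "continuous (at y within {s..c}) (williamson_primitive s)" if y: "y \<in> {s..c}" for y
  proof (cases "y = c")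
    case False
    then have "0 < y" "y < c"
      using y assms by auto
    then show ?thesis
      using williamson_primitive_has_real_derivative DERIV_isCont continuous_at_imp_continuous_at_within
      by blast
  next
    case True
    have "((\<lambda>y. (s^2 / y^2 - 2 * s / y) * psi y + s * (y - s) / y * psi1 (psi y))
        \<longlongrightarrow> (s^2 / c^2 - 2 * s / c) * 0 + s * (c - s) / c * 0) (at_left c)"
      using c_pos psi_tendsto_0_at_left_c psi1_psi_tendsto_0_at_left_c unfolding filterlim_at
      by (intro tendsto_intros) auto
    then have "(williamson_primitive s \<longlongrightarrow> williamson_primitive s c) (at c within {s..c})"
      using at_within_Icc_at_left[of s c] assms williamson_primitive_at_c
      unfolding williamson_primitive_def[abs_def] by simp
    then show ?thesis
      using True by (simp add: continuous_within)
  qed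
  then show ?thesis
    by (simp add: continuous_on_eq_continuous_within)
qed

lemma has_integral_williamson_kernel_deriv:
  assumes "0 < s" "s < c"
  shows "((\<lambda>y. williamson_kernel_deriv s y * (1 - radial_cdf y)) has_integral psi s) {s..c}"
proof -
  have "((\<lambda>y. williamson_kernel_deriv s y * (1 - radial_cdf y)) has_integral
      williamson_primitive s c - williamson_primitive s s) {s..c}"
  proof (rule fundamental_theorem_of_calculus_interior)
    fix y assume y: "y \<in> {s<..<c}"
    then have "radial_cdf y = inv_williamson y"
      using assms by (simp add: radial_cdf_def)
    then show "(williamson_primitive s has_vector_derivative
        williamson_kernel_deriv s y * (1 - radial_cdf y)) (at y)"
      using williamson_primitive_has_real_derivative[of y s] y assms
      by (simp add: has_real_derivative_iff_has_vector_derivative[symmetric])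
  qed (use assms continuous_on_williamson_primitive in auto)
  moreover have "williamson_primitive s c - williamson_primitive s s = psi s"
    unfolding williamson_primitive_at_c using assms
    by (simp add: williamson_primitive_def power2_eq_square field_simps)
  ultimately show ?thesis
    by simp
qed

end

locale phi_generator_3_monotone = phi_generator +
  assumes lam_le: "lam \<le> -1/2"
begin

text \<open>Since \<open>psi''' t = dpsi2 (psi t) * psi1 (psi t)\<close>, this says \<open>psi''' \<le> 0\<close>.\<close>
lemma dpsi2_nonneg:
  assumes "0 < x" "x < 1"
  shows "0 \<le> dpsi2 x"
proof -
  have p: "1 < x powr lam"
    using one_less_powr_lam assms by simp
  have "(lam - 1) * (x powr lam - 1) - 3 * lam * x powr lam = x powr lam * (-2 * lam - 1) + (1 - lam)"
    by (simp add: algebra_simps)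
  also have "\<dots> \<ge> 0"
    using lam_le lam_neg p by (intro add_nonneg_nonneg mult_nonneg_nonneg) auto
  finally have "0 \<le> (lam - 1) * (x powr lam - 1) - 3 * lam * x powr lam" .
  moreover have "0 \<le> - (lam ^ 3)"
    using lam_neg by (simp add: power_less_zero_eq less_imp_le)
  ultimately show ?thesis
    unfolding dpsi2_def using p assms by (intro divide_nonneg_pos mult_nonneg_nonneg) auto
qed

lemma isCont_inv_williamson: "0 < t \<Longrightarrow> t < c \<Longrightarrow> isCont inv_williamson t"
  using inv_williamson_has_real_derivative by (rule DERIV_isCont)

lemma inv_williamson_mono:
  assumes "0 < s" "s \<le> t" "t < c"
  shows "inv_williamson s \<le> inv_williamson t"
proof (rule DERIV_nonneg_imp_increasing_open[OF assms(2)])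
  fix x assume x: "s < x" "x < t"
  then have p: "0 < psi x" "psi x < 1"
    using psi_in_open assms by auto
  have "0 \<le> - (x^2 / 2) * dpsi2 (psi x) * psi1 (psi x)"
    using dpsi2_nonneg[OF p] psi1_neg[OF p] by (simp add: mult_nonneg_nonpos mult.assoc)
  then show "\<exists>y. (inv_williamson has_real_derivative y) (at x) \<and> 0 \<le> y"
    using inv_williamson_has_real_derivative[of x] x assms by auto
next
  show "continuous_on {s..t} inv_williamson"
    using isCont_inv_williamson assms by (intro continuous_at_imp_continuous_on) auto
qed

lemma inv_williamson_nonneg:
  assumes "0 < t" "t < c"
  shows "0 \<le> inv_williamson t"
proof (rule tendsto_upperbound[OF inv_williamson_tendsto_0])
  show "\<forall>\<^sub>F s in at_right 0. inv_williamson s \<le> inv_williamson t"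
    using eventually_at_right_real[OF assms(1)]
    by eventually_elim (use inv_williamson_mono assms in auto)
qed simp

lemma radial_cdf_mono: "x \<le> y \<Longrightarrow> radial_cdf x \<le> radial_cdf y"
  unfolding radial_cdf_def using inv_williamson_mono inv_williamson_nonneg inv_williamson_le_1 by auto

lemma radial_cdf_le_1: "radial_cdf x \<le> 1"
  unfolding radial_cdf_def using inv_williamson_le_1 by auto

lemma radial_cdf_right_continuous: "continuous (at_right a) radial_cdf"
proof -
  consider "a < 0 \<or> c \<le> a" | "a = 0" | "0 < a" "a < c"
    by linarith
  then show ?thesis
  proof cases
    case 1
    then have "\<forall>\<^sub>F x in at_right a. radial_cdf x = radial_cdf a"
      using eventually_at_right_real[of a "if a < 0 then 0 else a + 1"] c_pos
      by (auto simp: radial_cdf_def elim!: eventually_mono)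
    then show ?thesis
      unfolding continuous_within by (rule tendsto_eventually)
  next
    case 2
    have "\<forall>\<^sub>F x in at_right 0. inv_williamson x = radial_cdf x"
      using eventually_at_right_real[OF c_pos] by eventually_elim (auto simp: radial_cdf_def)
    then have "(radial_cdf \<longlongrightarrow> 0) (at_right 0)"
      by (rule Lim_transform_eventually[OF inv_williamson_tendsto_0])
    then show ?thesis
      unfolding continuous_within using 2 by (simp add: radial_cdf_def)
  next
    case 3
    have "\<forall>\<^sub>F x in nhds a. inv_williamson x = radial_cdf x"
      using eventually_nhds_in_open[of "{0<..<c}" a] 3
      by (auto simp: radial_cdf_def elim!: eventually_mono)
    then have "isCont radial_cdf a"
      using isCont_cong isCont_inv_williamson[OF 3] by blast
    then show ?thesis
      by (rule continuous_at_imp_continuous_at_within)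
  qed
qed

definition radial_measure :: "real measure" where
  "radial_measure = interval_measure radial_cdf"

lemma radial_cdf_tendsto_at_bot: "(radial_cdf \<longlongrightarrow> 0) at_bot"
  by (rule tendsto_eventually) (auto simp: eventually_at_bot_linorder radial_cdf_def)

lemma real_distribution_radial_measure: "real_distribution radial_measure"
proof -
  have "(radial_cdf \<longlongrightarrow> 1) at_top"
    using c_pos
    by (intro tendsto_eventually) (auto simp: eventually_at_top_linorder radial_cdf_def intro!: exI[of _ c])
  then show ?thesis
    unfolding radial_measure_def using radial_cdf_mono radial_cdf_right_continuous radial_cdf_tendsto_at_bot
    by (intro real_distribution_interval_measure)
qed

interpretation radial: real_distribution radial_measure
  by (rule real_distribution_radial_measure)

lemma emeasure_radial_measure_greaterThan: "emeasure radial_measure {x<..} = ennreal (1 - radial_cdf x)"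
proof -
  have "emeasure radial_measure {..x} = ennreal (radial_cdf x)"
    unfolding radial_measure_def
    using radial_cdf_mono radial_cdf_right_continuous radial_cdf_tendsto_at_bot
    by (intro emeasure_interval_measure_Iic)
  moreover have "emeasure radial_measure (space radial_measure - {..x})
      = emeasure radial_measure (space radial_measure) - emeasure radial_measure {..x}"
    by (rule emeasure_compl) (simp_all add: radial.emeasure_finite)
  moreover have "0 \<le> radial_cdf x"
    using radial_cdf_mono[of "min 0 x" x] by (simp add: radial_cdf_def)
  moreover have "space radial_measure - {..x} = {x<..}"
    by auto
  ultimately show ?thesis
    using radial.emeasure_space_1 ennreal_minus[of "radial_cdf x" 1] by simp
qed

lemma AE_radial_measure_pos: "AE r in radial_measure. 0 < r"
proof -
  have "emeasure radial_measure {..0} = 0"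
    unfolding radial_measure_def
    using radial_cdf_mono radial_cdf_right_continuous radial_cdf_tendsto_at_bot
    by (subst emeasure_interval_measure_Iic) (auto simp: radial_cdf_def)
  then have "{..0} \<in> null_sets radial_measure"
    by (simp add: null_sets_def)
  then show ?thesis
    by (rule AE_not_in[THEN eventually_mono]) auto
qed

lemma nn_integral_williamson_kernel_radial_measure:
  assumes "0 \<le> s"
  shows "(\<integral>\<^sup>+ r. ennreal (williamson_kernel s r) \<partial>radial_measure) = ennreal (psi s)"
proof (cases "s = 0")
  case True
  have "(\<integral>\<^sup>+ r. ennreal (williamson_kernel s r) \<partial>radial_measure) = (\<integral>\<^sup>+ r. 1 \<partial>radial_measure)"
    using AE_radial_measure_pos
    by (intro nn_integral_cong_AE) (auto simp: williamson_kernel_def True elim!: eventually_mono)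
  then show ?thesis
    using True psi_0 radial.emeasure_space_1 by simp
next
  case False
  then have s: "0 < s"
    using assms by simp
  let ?f = "\<lambda>y. williamson_kernel_deriv s y * (1 - radial_cdf y)"
  have "(\<integral>\<^sup>+ r. ennreal (williamson_kernel s r) \<partial>radial_measure)
      = (\<integral>\<^sup>+ y. ennreal (williamson_kernel_deriv s y) * emeasure radial_measure {y<..} * indicator {s..} y \<partial>lborel)"
    using radial.sigma_finite_measure_axioms s by (intro nn_integral_williamson_kernel) simp_all
  also have "\<dots> = (\<integral>\<^sup>+ y. ennreal (?f y) * indicator {s..c} y \<partial>lborel)"
  proof (intro nn_integral_cong)
    fix y :: real
    have "radial_cdf y = 1" if "c \<le> y"
      using that c_pos by (simp add: radial_cdf_def)
    then show "ennreal (williamson_kernel_deriv s y) * emeasure radial_measure {y<..} * indicator {s..} y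
        = ennreal (?f y) * indicator {s..c} y"
      using williamson_kernel_deriv_nonneg[of s y] s
      by (cases "y \<le> c") (auto simp: emeasure_radial_measure_greaterThan ennreal_mult' split: split_indicator)
  qed
  also have "\<dots> = ennreal (psi s)"
  proof (cases "s < c")
    case True
    then show ?thesis
      using has_integral_williamson_kernel_deriv[OF s True]
      by (intro nn_integral_has_integral_lebesgue')
        (use s williamson_kernel_deriv_nonneg radial_cdf_le_1 in \<open>auto intro!: mult_nonneg_nonneg\<close>)
  next
    case False
    then have vanish: "ennreal (?f y) * indicator {s..c} y = 0" for y
      using s by (auto simp: radial_cdf_def split: split_indicator)
    show ?thesis
      unfolding vanish using False psi_eq_0 by simp
  qed
  finally show ?thesis .
qed

section \<open>The copula measure\<close>

definition copula_measure :: "(real \<times> real \<times> real) measure" where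
  "copula_measure = simplex_mixture radial_measure psi_ext"

lemma prob_space_copula_measure: "prob_space copula_measure"
  unfolding copula_measure_def
  by (intro prob_space_simplex_mixture radial.prob_space_axioms borel_measurable_psi_ext) simp

lemma sets_copula_measure: "sets copula_measure = sets borel"
  by (simp add: copula_measure_def)

lemma measure_copula_measure_box:
  assumes "u1 \<in> {0..1}" "u2 \<in> {0..1}" "u3 \<in> {0..1}"
  shows "measure copula_measure ({..u1} \<times> {..u2} \<times> {..u3}) = psi (phi lam u1 + phi lam u2 + phi lam u3)"
proof -
  have t: "0 \<le> phi lam u1" "0 \<le> phi lam u2" "0 \<le> phi lam u3"
    using phi_range assms by auto
  have "emeasure copula_measure ({..u1} \<times> {..u2} \<times> {..u3})
      = (\<integral>\<^sup>+ r. ennreal (williamson_kernel (phi lam u1 + phi lam u2 + phi lam u3) r) \<partial>radial_measure)"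
    unfolding copula_measure_def
    by (rule emeasure_simplex_mixture_box[OF radial.events_eq_borel AE_radial_measure_pos
          borel_measurable_psi_ext t psi_ext_le_iff[OF assms(1)] psi_ext_le_iff[OF assms(2)]
          psi_ext_le_iff[OF assms(3)]])
  also have "\<dots> = ennreal (psi (phi lam u1 + phi lam u2 + phi lam u3))"
    using t by (intro nn_integral_williamson_kernel_radial_measure) simp
  finally show ?thesis
    using psi_range t by (simp add: measure_def)
qed

lemma measure_copula_measure_margins:
  assumes "t \<in> {0..1}"
  shows "measure copula_measure ({..t} \<times> UNIV \<times> UNIV) = t"
    "measure copula_measure (UNIV \<times> {..t} \<times> UNIV) = t"
    "measure copula_measure (UNIV \<times> UNIV \<times> {..t}) = t"
proof -
  have cube: "measure copula_measure (A \<times> B \<times> C)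
      = measure copula_measure ((A \<inter> {..1}) \<times> (B \<inter> {..1}) \<times> (C \<inter> {..1}))"
    if "A \<in> sets borel" "B \<in> sets borel" "C \<in> sets borel" for A B C
    unfolding copula_measure_def
    using borel_measurable_psi_ext psi_ext_le_1 that by (intro measure_simplex_mixture_Times_bound) simp_all
  have int: "{..t} \<inter> {..1} = {..t}" "UNIV \<inter> {..1} = {..1::real}"
    using assms by auto
  have "measure copula_measure ({..t} \<times> {..1} \<times> {..1}) = t"
    "measure copula_measure ({..1} \<times> {..t} \<times> {..1}) = t"
    "measure copula_measure ({..1} \<times> {..1} \<times> {..t}) = t"
    using measure_copula_measure_box assms phi_1 psi_phi by simp_all
  then show "measure copula_measure ({..t} \<times> UNIV \<times> UNIV) = t"
    "measure copula_measure (UNIV \<times> {..t} \<times> UNIV) = t"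
    "measure copula_measure (UNIV \<times> UNIV \<times> {..t}) = t"
    using cube[of "{..t}" UNIV UNIV] cube[of UNIV "{..t}" UNIV] cube[of UNIV UNIV "{..t}"]
    unfolding int by simp_all
qed

end

theorem theorem6:
  fixes lam :: real
  assumes "-1 < lam" and "lam \<le> -1/2"
  shows "copula3 (\<lambda>u1 u2 u3. phi_pinv lam (phi lam u1 + phi lam u2 + phi lam u3))"
proof -
  interpret phi_generator_3_monotone lam
    using assms by unfold_locales auto
  show ?thesis
    unfolding copula3_def psi_def[symmetric]
    using prob_space_copula_measure sets_copula_measure measure_copula_measure_box
      measure_copula_measure_margins
    by (intro exI[of _ copula_measure]) auto
qed

end
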